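(* Let $\mathcal D$ be an ordered, oriented Descartes configuration and consider the orbit $\mathcal A^\perp(\mathcal D)=\{\mathcal D':\mathbf W_{\mathcal D'}=\mathbf U\mathbf W_{\mathcal D},\ \mathbf U\in\mathcal A^\perp\}$. Let $\mathcal P^\perp_{\mathcal D}$ be the set of all circles (as unoriented point sets in $\hat{\mathbb C}$) occurring in configurations of this orbit. Then no two circles of $\mathcal P^\perp_{\mathcal D}$ cross: any two circles in $\mathcal P^\perp_{\mathcal D}$ either coincide, or are tangent (meet in exactly one point), or are disjoint.
   Context: Oriented circles/lines and oriented Descartes configurations: four mutually tangent oriented circles/lines with six distinct tangency points whose interiors are pairwise disjoint or become so after reversing all orientations (interior of a positively curved circle is the open disk, of a negatively curved one the open exterior, of a line the half-plane its unit normal points into). Augmented curvature-center coordinates: for center $\mathbf c$, oriented radius $r$: $\mathbf w(C)=((|\mathbf c|^2-r^2)/r,1/r,c_1/r,c_2/r)$; for the line $\mathbf x\cdot\mathbf h=m$ with interior-pointing unit normal $\mathbf h$: $(2m,0,h_1,h_2)$; $\mathbf W_{\mathcal D}$ has rows $\mathbf w(C_k)$. Known fact: $\mathcal D\mapsto\mathbf W_{\mathcal D}$ is a bijection onto $\{\mathbf W:\mathbf W^T\mathbf Q_D\mathbf W=\mathbf Q_W\}$ with $\mathbf Q_D=\mathbf I-\frac12\mathbf 1\mathbf 1^T$, $\mathbf Q_W=\begin{pmatrix}0&-4&0&0\\-4&0&0&0\\0&0&2&0\\0&0&0&2\end{pmatrix}$. The dual Apollonian group is $\mathcal A^\perp=\langle\mathbf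 S_1^\perp,\dots,\mathbf S_4^\perp\rangle$, where $\mathbf S_i^\perp$ agrees with the $4\times 4$ identity except in column $i$, which has $-1$ in position $i$ and $2$ in the other three positions (e.g. $\mathbf S_1^\perp$ has first column $(-1,2,2,2)^T$); these matrices preserve $\mathbf Q_D$. *)

theory Defs
  imports "HOL-Analysis.Analysis"
begin

text \<open>Circ c r : circle with center c and oriented radius r (r \<noteq> 0);
             positive r: interior is the open disk, negative r: the open exterior.
  Line h m : the line {x. x\<cdot>h = m} with unit normal h pointing into its interior.\<close>
datatype ocircle = Circ complex real | Line complex real

definition dotc :: "complex \<Rightarrow> complex \<Rightarrow> real" where
  "dotc x y = Re x * Re y + Im x * Im y"

fun valid_oc :: "ocircle \<Rightarrow> bool" where
  "valid_oc (Circ c r) = (r \<noteq> 0)"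
| "valid_oc (Line h m) = (cmod h = 1)"

text \<open>Points of the extended plane: None is the point at infinity.\<close>
type_synonym ecomplex = "complex option"

fun pts :: "ocircle \<Rightarrow> ecomplex set" where
  "pts (Circ c r) = Some ` {z. cmod (z - c) = \<bar>r\<bar>}"
| "pts (Line h m) = insert None (Some ` {z. dotc z h = m})"

fun interior_oc :: "ocircle \<Rightarrow> complex set" where
  "interior_oc (Circ c r) = (if r > 0 then {z. cmod (z - c) < r} else {z. cmod (z - c) > - r})"
| "interior_oc (Line h m) = {z. dotc z h > m}"

fun reverse_oc :: "ocircle \<Rightarrow> ocircle" where
  "reverse_oc (Circ c r) = Circ c (- r)"
| "reverse_oc (Line h m) = Line (- h) (- m)"

definition tangent_oc :: "ocircle \<Rightarrow> ocircle \<Rightarrow> bool" where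
  "tangent_oc C C' \<longleftrightarrow> (\<exists>!z. z \<in> pts C \<inter> pts C')"

definition tpoint :: "ocircle \<Rightarrow> ocircle \<Rightarrow> ecomplex" where
  "tpoint C C' = (THE z. z \<in> pts C \<inter> pts C')"

definition descartes :: "(4 \<Rightarrow> ocircle) \<Rightarrow> bool" where
  "descartes D \<longleftrightarrow>
     (\<forall>i. valid_oc (D i)) \<and>
     (\<forall>i j. i \<noteq> j \<longrightarrow> tangent_oc (D i) (D j)) \<and>
     (\<forall>i j k l. i \<noteq> j \<longrightarrow> k \<noteq> l \<longrightarrow> {i, j} \<noteq> {k, l} \<longrightarrow>
         tpoint (D i) (D j) \<noteq> tpoint (D k) (D l)) \<and>
     ((\<forall>i j. i \<noteq> j \<longrightarrow> interior_oc (D i) \<inter> interior_oc (D j) = {}) \<or>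
      (\<forall>i j. i \<noteq> j \<longrightarrow> interior_oc (reverse_oc (D i)) \<inter> interior_oc (reverse_oc (D j)) = {}))"

fun acc :: "ocircle \<Rightarrow> real ^ 4" where
  "acc (Circ c r) = vector [((cmod c)\<^sup>2 - r\<^sup>2) / r, 1 / r, Re c / r, Im c / r]"
| "acc (Line h m) = vector [2 * m, 0, Re h, Im h]"

definition Wmat :: "(4 \<Rightarrow> ocircle) \<Rightarrow> real ^ 4 ^ 4" where
  "Wmat D = (\<chi> k. acc (D k))"

definition Sperp :: "4 \<Rightarrow> real ^ 4 ^ 4" where
  "Sperp i = (\<chi> a b. if b = i then (if a = i then -1 else 2) else (if a = b then 1 else 0))"

inductive_set dual_apollonian :: "(real ^ 4 ^ 4) set" where
  gen: "Sperp i \<in> dual_apollonian"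
| one: "mat 1 \<in> dual_apollonian"
| mult: "U \<in> dual_apollonian \<Longrightarrow> V \<in> dual_apollonian \<Longrightarrow> U ** V \<in> dual_apollonian"
| inv: "U \<in> dual_apollonian \<Longrightarrow> matrix_inv U \<in> dual_apollonian"

definition orbit_dual :: "(4 \<Rightarrow> ocircle) \<Rightarrow> (4 \<Rightarrow> ocircle) set" where
  "orbit_dual D = {D'. descartes D' \<and> (\<exists>U \<in> dual_apollonian. Wmat D' = U ** Wmat D)}"

definition packing_dual :: "(4 \<Rightarrow> ocircle) \<Rightarrow> ecomplex set set" where
  "packing_dual D = {pts (D' k) | D' k. D' \<in> orbit_dual D}"

end

theory Submission
  imports Defs
begin

text \<open>The inversive product of two oriented circles is the bilinear form \<open>2 Q_W\<^sup>-\<^sup>1\<close>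
  evaluated on their augmented curvature-center coordinates. Elementary geometry shows that it
  is \<open>\<plusminus>1\<close> for tangent circles, and that two circles whose inversive product has absolute value
  at least 1 coincide, touch or are disjoint. For a Descartes configuration with coordinate
  matrix W the Gram matrix \<open>G = W (2 Q_W\<^sup>-\<^sup>1) W\<^sup>T\<close> therefore has all entries \<open>\<plusminus>1\<close>,
  which are odd. The generators of the dual Apollonian group are congruent to the identity
  modulo 2, hence so is every element, and for two configurations U W and V W of the orbit the
  matrix \<open>U G V\<^sup>T\<close> of their mutual inversive products is again odd entrywise. Odd integers
  have absolute value at least 1, so no two circles of the orbit cross.\<close>

lemma sphere_hyperplane_eq_foot:
  fixes x h :: "'a::real_inner"
  assumes "h \<noteq> 0" "r\<^sup>2 * (norm h)\<^sup>2 \<le> p\<^sup>2" "norm x = r" "x \<bullet> h = p"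
  shows "x = (p / (norm h)\<^sup>2) *\<^sub>R h"
proof -
  have h: "(norm h)\<^sup>2 > 0" using assms(1) by simp
  have xx: "x \<bullet> x = r\<^sup>2" using assms(3) power2_norm_eq_inner[of x] by simp
  have "(norm (x - (p / (norm h)\<^sup>2) *\<^sub>R h))\<^sup>2 = r\<^sup>2 - p\<^sup>2 / (norm h)\<^sup>2"
    using assms(4) xx h
    by (simp add: power2_norm_eq_inner inner_diff_left inner_diff_right inner_commute)
       (simp add: power2_eq_square field_simps)
  also have "\<dots> \<le> 0"
    using assms(2) h by (simp add: field_simps)
  finally show ?thesis by simp
qed

lemma sphere_hyperplane_reflect:
  fixes x h :: "'a::real_inner"
  assumes "p\<^sup>2 < r\<^sup>2 * (norm h)\<^sup>2" "norm x = r" "x \<bullet> h = p"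
  defines "y \<equiv> (2 * p / (norm h)\<^sup>2) *\<^sub>R h - x"
  shows "norm y = r" "y \<bullet> h = p" "y \<noteq> x"
proof -
  have h: "(norm h)\<^sup>2 > 0"
    using assms(1) by (cases "h = 0") auto
  have xx: "x \<bullet> x = r\<^sup>2" using assms(2) power2_norm_eq_inner[of x] by simp
  have "(norm y)\<^sup>2 = r\<^sup>2"
    using assms(3) xx h unfolding y_def
    by (simp add: power2_norm_eq_inner inner_diff_left inner_diff_right inner_commute)
  then show "norm y = r"
    using assms(2) power2_eq_iff_nonneg[of "norm y" r] by auto
  show "y \<bullet> h = p"
    using assms(3) h unfolding y_def by (simp add: inner_diff_left power2_norm_eq_inner)
  show "y \<noteq> x"
  proof
    assume "y = x"
    then have "2 *\<^sub>R ((p / (norm h)\<^sup>2) *\<^sub>R h) = 2 *\<^sub>R x"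
      unfolding y_def by (metis diff_eq_eq scaleR_2 scaleR_scaleR times_divide_eq_right)
    then have "x = (p / (norm h)\<^sup>2) *\<^sub>R h"
      by (subst (asm) scaleR_cancel_left) auto
    then have "r\<^sup>2 * (norm h)\<^sup>2 = p\<^sup>2"
      using xx h by (simp add: dot_square_norm) (simp add: field_simps power2_eq_square)
    with assms(1) show False by simp
  qed
qed

lemma sphere_hyperplane_subsingleton:
  fixes c h :: "'a::real_inner"
  assumes "h \<noteq> 0" "r\<^sup>2 * (norm h)\<^sup>2 \<le> p\<^sup>2"
  shows "{x. norm (x - c) = r \<and> (x - c) \<bullet> h = p} \<subseteq> {c + (p / (norm h)\<^sup>2) *\<^sub>R h}"
  using sphere_hyperplane_eq_foot[OF assms] by (auto simp: algebra_simps)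

lemma sphere_hyperplane_unique_imp_tangent:
  fixes c h :: "'a::real_inner"
  assumes "\<exists>!x. norm (x - c) = r \<and> (x - c) \<bullet> h = p"
  shows "p\<^sup>2 = r\<^sup>2 * (norm h)\<^sup>2"
proof -
  obtain x where x: "norm (x - c) = r" "(x - c) \<bullet> h = p"
    and uniq: "\<And>y. norm (y - c) = r \<Longrightarrow> (y - c) \<bullet> h = p \<Longrightarrow> y = x"
    using assms by blast
  have "p\<^sup>2 \<le> r\<^sup>2 * (norm h)\<^sup>2"
    using Cauchy_Schwarz_ineq[of "x - c" h] x by (simp add: dot_square_norm)
  moreover have "\<not> p\<^sup>2 < r\<^sup>2 * (norm h)\<^sup>2"
  proof
    assume lt: "p\<^sup>2 < r\<^sup>2 * (norm h)\<^sup>2"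
    note reflect = sphere_hyperplane_reflect[OF lt x]
    have "c + ((2 * p / (norm h)\<^sup>2) *\<^sub>R h - (x - c)) = x"
      using reflect(1,2) by (intro uniq) simp_all
    with reflect(3) show False by (simp add: algebra_simps)
  qed
  ultimately show ?thesis by simp
qed

lemma sphere_inter_sphere:
  fixes c c' :: "'a::real_inner"
  assumes "0 \<le> r'"
  shows "sphere c r \<inter> sphere c' r' =
    {x. norm (x - c) = r \<and> (x - c) \<bullet> (c' - c) = (r\<^sup>2 + (dist c c')\<^sup>2 - r'\<^sup>2) / 2}"
proof (intro set_eqI)
  fix x
  have "x \<in> sphere c r \<inter> sphere c' r' \<longleftrightarrow> norm (x - c) = r \<and> (norm ((x - c) - (c' - c)))\<^sup>2 = r'\<^sup>2"
    using assms by (simp add: dist_norm norm_minus_commute power2_eq_iff_nonneg)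
  moreover have "(norm ((x - c) - (c' - c)))\<^sup>2
      = (norm (x - c))\<^sup>2 - 2 * ((x - c) \<bullet> (c' - c)) + (dist c c')\<^sup>2"
    by (simp add: dot_square_norm[symmetric] inner_diff_left inner_diff_right inner_commute
        dist_norm norm_minus_commute[of c c'])
  ultimately show "x \<in> sphere c r \<inter> sphere c' r' \<longleftrightarrow> x \<in> {x. norm (x - c) = r \<and>
      (x - c) \<bullet> (c' - c) = (r\<^sup>2 + (dist c c')\<^sup>2 - r'\<^sup>2) / 2}"
    by auto
qed

lemma sphere_inter_hyperplane:
  fixes c h :: "'a::real_inner"
  shows "sphere c r \<inter> {x. x \<bullet> h = m} = {x. norm (x - c) = r \<and> (x - c) \<bullet> h = m - c \<bullet> h}"
  by (auto simp: dist_norm norm_minus_commute inner_diff_left)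

lemma hyperplanes_parallel:
  fixes h h' :: "'a::real_inner"
  assumes "norm h = 1" "norm h' = 1" "1 \<le> (h \<bullet> h')\<^sup>2"
  shows "{x. x \<bullet> h = m} = {x. x \<bullet> h' = m'} \<or> {x. x \<bullet> h = m} \<inter> {x. x \<bullet> h' = m'} = {}"
proof -
  have "(h \<bullet> h')\<^sup>2 \<le> 1"
    using Cauchy_Schwarz_ineq[of h h'] assms(1,2) by (simp add: dot_square_norm)
  then have "\<bar>h \<bullet> h'\<bar> = norm h * norm h'"
    using assms by (simp add: abs_square_eq_1)
  then have "h' = h \<or> h' = - h"
    using norm_cauchy_schwarz_abs_eq[of h h'] assms(1,2) by simp
  then show ?thesis
    by (cases "m' = m"; cases "m' = - m") (auto simp: inner_minus_right)
qed

lemma hyperplanes_intersect: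
  fixes h h' :: "'a::real_inner"
  assumes "norm h = 1" "norm h' = 1" "(h \<bullet> h')\<^sup>2 < 1"
  shows "\<exists>x. x \<bullet> h = m \<and> x \<bullet> h' = m'"
proof -
  define s where "s = h \<bullet> h'"
  define a where "a = (m - s * m') / (1 - s\<^sup>2)"
  define b where "b = (m' - s * m) / (1 - s\<^sup>2)"
  have nz: "1 - s\<^sup>2 \<noteq> 0" using assms(3) unfolding s_def by simp
  then have a: "a * (1 - s\<^sup>2) = m - s * m'" and b: "b * (1 - s\<^sup>2) = m' - s * m"
    by (simp_all add: a_def b_def)
  have "(a + b * s) * (1 - s\<^sup>2) = a * (1 - s\<^sup>2) + s * (b * (1 - s\<^sup>2))"
    "(a * s + b) * (1 - s\<^sup>2) = s * (a * (1 - s\<^sup>2)) + b * (1 - s\<^sup>2)"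
    by (simp_all add: algebra_simps)
  then have "(a + b * s) * (1 - s\<^sup>2) = m * (1 - s\<^sup>2)" "(a * s + b) * (1 - s\<^sup>2) = m' * (1 - s\<^sup>2)"
    unfolding a b by (simp_all add: algebra_simps power2_eq_square)
  then have "a + b * s = m" "a * s + b = m'"
    using nz by simp_all
  moreover have "h \<bullet> h = 1" "h' \<bullet> h' = 1"
    using assms(1,2) by (simp_all add: dot_square_norm)
  ultimately show ?thesis
    by (intro exI[of _ "a *\<^sub>R h + b *\<^sub>R h'"]) (simp add: inner_add_left s_def inner_commute[of h' h])
qed

definition non_crossing :: "'a set \<Rightarrow> 'a set \<Rightarrow> bool" where
  "non_crossing A B \<longleftrightarrow> A = B \<or> (\<exists>!z. z \<in> A \<inter> B) \<or> A \<inter> B = {}"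

lemma non_crossing_commute: "non_crossing A B \<longleftrightarrow> non_crossing B A"
  unfolding non_crossing_def by (auto simp: Int_commute[of A B])

lemma non_crossing_if_subsingleton:
  assumes "A \<inter> B \<subseteq> {a}"
  shows "non_crossing A B"
proof -
  have "A \<inter> B = {} \<or> A \<inter> B = {a}"
    using assms by (simp add: subset_singleton_iff)
  then show ?thesis
    unfolding non_crossing_def by (metis empty_iff singleton_iff)
qed

lemma pts_Circ: "pts (Circ c r) = Some ` sphere c \<bar>r\<bar>"
proof -
  have "{z. cmod (z - c) = \<bar>r\<bar>} = sphere c \<bar>r\<bar>"
    by (auto simp: dist_norm norm_minus_commute)
  then show ?thesis by simp
qed

lemma pts_Line: "pts (Line h m) = insert None (Some ` {z. z \<bullet> h = m})"
  by (simp add: dotc_def inner_complex_def)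

declare pts.simps [simp del]

lemma vector_4 [simp]:
  "(vector [a, b, c, d] :: 'a::zero^4) $ 1 = a"
  "(vector [a, b, c, d] :: 'a::zero^4) $ 2 = b"
  "(vector [a, b, c, d] :: 'a::zero^4) $ 3 = c"
  "(vector [a, b, c, d] :: 'a::zero^4) $ 4 = d"
  unfolding vector_def by simp_all

definition lorentz_form :: "real^4 \<Rightarrow> real^4 \<Rightarrow> real" where
  "lorentz_form x y = x$3 * y$3 + x$4 * y$4 - (x$1 * y$2 + x$2 * y$1) / 2"

definition lorentz_matrix :: "real^4^4" where
  "lorentz_matrix = (\<chi> a b. if (a = 1 \<and> b = 2) \<or> (a = 2 \<and> b = 1) then - 1 / 2
     else if a = b \<and> (a = 3 \<or> a = 4) then 1 else 0)"

lemma lorentz_matrix_sandwich: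
  "(A ** lorentz_matrix ** transpose B) $ k $ l = lorentz_form (A $ k) (B $ l)"
  unfolding lorentz_matrix_def lorentz_form_def matrix_matrix_mult_def transpose_def
  by (simp add: sum_4 field_simps)

definition inversive_prod :: "ocircle \<Rightarrow> ocircle \<Rightarrow> real" where
  "inversive_prod C C' = lorentz_form (acc C) (acc C')"

lemma Wmat_lorentz_sandwich:
  "(Wmat D ** lorentz_matrix ** transpose (Wmat D')) $ k $ l = inversive_prod (D k) (D' l)"
  by (simp add: lorentz_matrix_sandwich Wmat_def inversive_prod_def)

lemma inversive_prod_commute: "inversive_prod C C' = inversive_prod C' C"
  unfolding inversive_prod_def lorentz_form_def by (simp add: algebra_simps)

lemma inversive_prod_self:
  assumes "valid_oc C"
  shows "inversive_prod C C = 1"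
proof (cases C)
  case (Circ c r)
  then show ?thesis
    using assms by (simp add: inversive_prod_def lorentz_form_def cmod_power2) (simp add: field_simps power2_eq_square)
next
  case (Line h m)
  then show ?thesis
    using assms cmod_power2[of h] by (simp add: inversive_prod_def lorentz_form_def power2_eq_square)
qed

lemma inversive_prod_Circ_Circ:
  assumes "r \<noteq> 0" "r' \<noteq> 0"
  shows "inversive_prod (Circ c r) (Circ c' r') = (r\<^sup>2 + r'\<^sup>2 - (dist c c')\<^sup>2) / (2 * r * r')"
proof -
  have "(dist c c')\<^sup>2 = (cmod c)\<^sup>2 + (cmod c')\<^sup>2 - 2 * (Re c * Re c' + Im c * Im c')"
    by (simp add: dist_norm cmod_power2) (simp add: power2_eq_square algebra_simps)
  moreover have "2 * r * r' * inversive_prod (Circ c r) (Circ c' r')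
      = 2 * (Re c * Re c' + Im c * Im c') - ((cmod c)\<^sup>2 - r\<^sup>2) - ((cmod c')\<^sup>2 - r'\<^sup>2)"
    using assms by (simp add: inversive_prod_def lorentz_form_def field_simps)
  ultimately show ?thesis
    using assms by (simp add: field_simps)
qed

lemma inversive_prod_Circ_Line:
  "r \<noteq> 0 \<Longrightarrow> inversive_prod (Circ c r) (Line h m) = (c \<bullet> h - m) / r"
  by (simp add: inversive_prod_def lorentz_form_def inner_complex_def field_simps)

lemma inversive_prod_Line_Line: "inversive_prod (Line h m) (Line h' m') = h \<bullet> h'"
  by (simp add: inversive_prod_def lorentz_form_def inner_complex_def)

lemma inversive_prod_Circ_Circ_sq:
  assumes "r \<noteq> 0" "r' \<noteq> 0"
  shows "(r * r')\<^sup>2 * ((inversive_prod (Circ c r) (Circ c' r'))\<^sup>2 - 1)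
    = ((r\<^sup>2 + (dist c c')\<^sup>2 - r'\<^sup>2) / 2)\<^sup>2 - r\<^sup>2 * (dist c c')\<^sup>2"
  using assms unfolding inversive_prod_Circ_Circ[OF assms]
  by (simp add: field_simps power2_eq_square)

lemma ex1_Some_image_iff: "(\<exists>!z. z \<in> Some ` A) \<longleftrightarrow> (\<exists>!x. x \<in> A)"
  by auto

lemma pts_Circ_Int_pts_Circ:
  "pts (Circ c r) \<inter> pts (Circ c' r') = Some ` (sphere c \<bar>r\<bar> \<inter> sphere c' \<bar>r'\<bar>)"
  by (auto simp: pts_Circ)

lemma pts_Circ_Int_pts_Line:
  "pts (Circ c r) \<inter> pts (Line h m) = Some ` (sphere c \<bar>r\<bar> \<inter> {z. z \<bullet> h = m})"
  by (auto simp: pts_Circ pts_Line)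

lemma tangent_oc_commute: "tangent_oc C C' \<longleftrightarrow> tangent_oc C' C"
  unfolding tangent_oc_def by (simp add: Int_commute[of "pts C"])

lemma non_crossing_Circ_Circ:
  assumes "r \<noteq> 0" "r' \<noteq> 0" "1 \<le> (inversive_prod (Circ c r) (Circ c' r'))\<^sup>2"
  shows "non_crossing (pts (Circ c r)) (pts (Circ c' r'))"
proof (cases "c = c'")
  case True
  then show ?thesis
    by (cases "\<bar>r\<bar> = \<bar>r'\<bar>") (auto simp: non_crossing_def pts_Circ)
next
  case False
  define p where "p = (r\<^sup>2 + (dist c c')\<^sup>2 - r'\<^sup>2) / 2"
  have "0 \<le> (r * r')\<^sup>2 * ((inversive_prod (Circ c r) (Circ c' r'))\<^sup>2 - 1)"
    using assms(3) by simp
  then have "\<bar>r\<bar>\<^sup>2 * (norm (c' - c))\<^sup>2 \<le> p\<^sup>2"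
    unfolding inversive_prod_Circ_Circ_sq[OF assms(1,2)] p_def by (simp add: dist_norm norm_minus_commute)
  moreover have "c' - c \<noteq> 0"
    using False by simp
  ultimately have "{x. norm (x - c) = \<bar>r\<bar> \<and> (x - c) \<bullet> (c' - c) = p}
      \<subseteq> {c + (p / (norm (c' - c))\<^sup>2) *\<^sub>R (c' - c)}"
    by (intro sphere_hyperplane_subsingleton)
  then have "sphere c \<bar>r\<bar> \<inter> sphere c' \<bar>r'\<bar> \<subseteq> {c + (p / (norm (c' - c))\<^sup>2) *\<^sub>R (c' - c)}"
    by (simp add: sphere_inter_sphere p_def)
  then have "pts (Circ c r) \<inter> pts (Circ c' r') \<subseteq> {Some (c + (p / (norm (c' - c))\<^sup>2) *\<^sub>R (c' - c))}"
    unfolding pts_Circ_Int_pts_Circ using image_mono[of _ _ Some] by fastforce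
  then show ?thesis
    by (rule non_crossing_if_subsingleton)
qed

lemma inversive_prod_sq_eq_1_if_tangent_Circ_Circ:
  assumes "r \<noteq> 0" "r' \<noteq> 0" "tangent_oc (Circ c r) (Circ c' r')"
  shows "(inversive_prod (Circ c r) (Circ c' r'))\<^sup>2 = 1"
proof -
  define p where "p = (r\<^sup>2 + (dist c c')\<^sup>2 - r'\<^sup>2) / 2"
  have "pts (Circ c r) \<inter> pts (Circ c' r')
      = Some ` {x. norm (x - c) = \<bar>r\<bar> \<and> (x - c) \<bullet> (c' - c) = p}"
    by (simp add: pts_Circ_Int_pts_Circ sphere_inter_sphere p_def)
  then have "\<exists>!x. norm (x - c) = \<bar>r\<bar> \<and> (x - c) \<bullet> (c' - c) = p"
    using assms(3) unfolding tangent_oc_def by (simp add: ex1_Some_image_iff)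
  then have "p\<^sup>2 = \<bar>r\<bar>\<^sup>2 * (norm (c' - c))\<^sup>2"
    by (rule sphere_hyperplane_unique_imp_tangent)
  then have "p\<^sup>2 = r\<^sup>2 * (dist c c')\<^sup>2"
    by (simp add: dist_norm norm_minus_commute)
  then have "(r * r')\<^sup>2 * ((inversive_prod (Circ c r) (Circ c' r'))\<^sup>2 - 1) = 0"
    unfolding inversive_prod_Circ_Circ_sq[OF assms(1,2)] p_def by simp
  then show ?thesis
    using assms(1,2) by simp
qed

lemma non_crossing_Circ_Line:
  assumes "r \<noteq> 0" "norm h = 1" "1 \<le> (inversive_prod (Circ c r) (Line h m))\<^sup>2"
  shows "non_crossing (pts (Circ c r)) (pts (Line h m))"
proof -
  have "\<bar>r\<bar>\<^sup>2 * (norm h)\<^sup>2 \<le> (m - c \<bullet> h)\<^sup>2"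
    using assms by (simp add: inversive_prod_Circ_Line power_divide power2_commute[of m])
  moreover have "h \<noteq> 0"
    using assms(2) by auto
  ultimately have "sphere c \<bar>r\<bar> \<inter> {z. z \<bullet> h = m} \<subseteq> {c + ((m - c \<bullet> h) / (norm h)\<^sup>2) *\<^sub>R h}"
    unfolding sphere_inter_hyperplane by (intro sphere_hyperplane_subsingleton)
  then have "pts (Circ c r) \<inter> pts (Line h m) \<subseteq> {Some (c + ((m - c \<bullet> h) / (norm h)\<^sup>2) *\<^sub>R h)}"
    unfolding pts_Circ_Int_pts_Line using image_mono[of _ _ Some] by fastforce
  then show ?thesis
    by (rule non_crossing_if_subsingleton)
qed

lemma inversive_prod_sq_eq_1_if_tangent_Circ_Line:
  assumes "r \<noteq> 0" "norm h = 1" "tangent_oc (Circ c r) (Line h m)"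
  shows "(inversive_prod (Circ c r) (Line h m))\<^sup>2 = 1"
proof -
  have "\<exists>!x. norm (x - c) = \<bar>r\<bar> \<and> (x - c) \<bullet> h = m - c \<bullet> h"
    using assms(3) unfolding tangent_oc_def pts_Circ_Int_pts_Line sphere_inter_hyperplane
    by (simp add: ex1_Some_image_iff)
  then have "(m - c \<bullet> h)\<^sup>2 = \<bar>r\<bar>\<^sup>2 * (norm h)\<^sup>2"
    by (rule sphere_hyperplane_unique_imp_tangent)
  then have "(m - c \<bullet> h)\<^sup>2 = r\<^sup>2"
    using assms(2) by simp
  then show ?thesis
    using assms(1) by (simp add: inversive_prod_Circ_Line power_divide power2_commute[of m])
qed

lemma non_crossing_Line_Line:
  assumes "norm h = 1" "norm h' = 1" "1 \<le> (inversive_prod (Line h m) (Line h' m'))\<^sup>2"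
  shows "non_crossing (pts (Line h m)) (pts (Line h' m'))"
  using hyperplanes_parallel[OF assms(1,2), of m m'] assms(3)
  by (auto simp: inversive_prod_Line_Line pts_Line non_crossing_def)

lemma inversive_prod_sq_eq_1_if_tangent_Line_Line:
  assumes "norm h = 1" "norm h' = 1" "tangent_oc (Line h m) (Line h' m')"
  shows "(inversive_prod (Line h m) (Line h' m'))\<^sup>2 = 1"
proof -
  have "(h \<bullet> h')\<^sup>2 \<le> 1"
    using Cauchy_Schwarz_ineq[of h h'] assms(1,2) by (simp add: dot_square_norm)
  moreover have "\<not> (h \<bullet> h')\<^sup>2 < 1"
  proof
    assume "(h \<bullet> h')\<^sup>2 < 1"
    then obtain w where "w \<bullet> h = m" "w \<bullet> h' = m'"
      using hyperplanes_intersect assms(1,2) by blast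
    then have "None \<in> pts (Line h m) \<inter> pts (Line h' m')" "Some w \<in> pts (Line h m) \<inter> pts (Line h' m')"
      by (simp_all add: pts_Line)
    with assms(3) show False
      unfolding tangent_oc_def by (metis option.distinct(1))
  qed
  ultimately show ?thesis
    by (simp add: inversive_prod_Line_Line)
qed

lemma non_crossing_pts_if_one_le_inversive_prod_sq:
  assumes "valid_oc C" "valid_oc C'" "1 \<le> (inversive_prod C C')\<^sup>2"
  shows "non_crossing (pts C) (pts C')"
proof (cases C)
  case C: (Circ c r)
  show ?thesis
  proof (cases C')
    case (Circ c' r')
    with C assms show ?thesis by (simp add: non_crossing_Circ_Circ)
  next
    case (Line h m)
    with C assms show ?thesis by (simp add: non_crossing_Circ_Line)
  qed
next
  case C: (Line h m)
  show ?thesis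
  proof (cases C')
    case (Circ c r)
    with C assms show ?thesis
      by (simp add: non_crossing_commute[of "pts (Line h m)"] inversive_prod_commute[of "Line h m"] non_crossing_Circ_Line)
  next
    case (Line h' m')
    with C assms show ?thesis by (simp add: non_crossing_Line_Line)
  qed
qed

lemma inversive_prod_sq_eq_1_if_tangent_oc:
  assumes "valid_oc C" "valid_oc C'" "tangent_oc C C'"
  shows "(inversive_prod C C')\<^sup>2 = 1"
proof (cases C)
  case C: (Circ c r)
  show ?thesis
  proof (cases C')
    case (Circ c' r')
    with C assms show ?thesis by (simp add: inversive_prod_sq_eq_1_if_tangent_Circ_Circ)
  next
    case (Line h m)
    with C assms show ?thesis by (simp add: inversive_prod_sq_eq_1_if_tangent_Circ_Line)
  qed
next
  case C: (Line h m)
  show ?thesis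
  proof (cases C')
    case (Circ c r)
    with C assms show ?thesis
      by (simp add: tangent_oc_commute[of "Line h m"] inversive_prod_commute[of "Line h m"] inversive_prod_sq_eq_1_if_tangent_Circ_Line)
  next
    case (Line h' m')
    with C assms show ?thesis by (simp add: inversive_prod_sq_eq_1_if_tangent_Line_Line)
  qed
qed

definition cong_mod2 :: "real \<Rightarrow> real \<Rightarrow> bool" where
  "cong_mod2 x y \<longleftrightarrow> (x - y) / 2 \<in> \<int>"

lemma cong_mod2_refl [simp]: "cong_mod2 x x"
  by (simp add: cong_mod2_def)

lemma cong_mod2_trans: "cong_mod2 x y \<Longrightarrow> cong_mod2 y z \<Longrightarrow> cong_mod2 x z"
proof -
  assume "cong_mod2 x y" "cong_mod2 y z"
  then have "(x - y) / 2 + (y - z) / 2 \<in> \<int>"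
    unfolding cong_mod2_def by (rule Ints_add)
  then show "cong_mod2 x z" by (simp add: cong_mod2_def diff_divide_distrib)
qed

lemma cong_mod2_Ints: "cong_mod2 x y \<Longrightarrow> y \<in> \<int> \<Longrightarrow> x \<in> \<int>"
proof -
  assume "cong_mod2 x y" "y \<in> \<int>"
  then have "2 * ((x - y) / 2) + y \<in> \<int>"
    unfolding cong_mod2_def by (intro Ints_add Ints_mult) auto
  also have "2 * ((x - y) / 2) + y = x" by (simp add: field_simps)
  finally show "x \<in> \<int>" .
qed

lemma cong_mod2_mult:
  assumes "cong_mod2 x x'" "cong_mod2 y y'" "x' \<in> \<int>" "y \<in> \<int>"
  shows "cong_mod2 (x * y) (x' * y')"
proof -
  have "(x * y - x' * y') / 2 = (x - x') / 2 * y + x' * ((y - y') / 2)"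
    by (simp add: field_simps)
  also have "\<dots> \<in> \<int>"
    using assms unfolding cong_mod2_def by (intro Ints_add Ints_mult)
  finally show ?thesis unfolding cong_mod2_def .
qed

lemma cong_mod2_sum:
  assumes "\<And>a. a \<in> A \<Longrightarrow> cong_mod2 (f a) (g a)"
  shows "cong_mod2 (sum f A) (sum g A)"
proof -
  have "(sum f A - sum g A) / 2 = (\<Sum>a\<in>A. (f a - g a) / 2)"
    by (simp add: sum_subtractf sum_divide_distrib[symmetric])
  also have "\<dots> \<in> \<int>"
    using assms unfolding cong_mod2_def by (intro Ints_sum)
  finally show ?thesis unfolding cong_mod2_def .
qed

lemma one_le_square_if_cong_mod2_one:
  assumes "cong_mod2 x 1"
  shows "1 \<le> x\<^sup>2"
proof -
  obtain n where "(x - 1) / 2 = of_int n"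
    using assms unfolding cong_mod2_def by (blast elim: Ints_cases)
  then have x: "x = of_int (2 * n + 1)" by (simp add: field_simps)
  have "1 \<le> \<bar>2 * n + 1\<bar>" by presburger
  then have "1 \<le> \<bar>x\<bar>" unfolding x by linarith
  then show ?thesis using abs_le_square_iff[of 1 x] by simp
qed

definition int_matrix :: "real^'n^'m \<Rightarrow> bool" where
  "int_matrix A \<longleftrightarrow> (\<forall>i j. A$i$j \<in> \<int>)"

definition mat_cong_mod2 :: "real^'n^'m \<Rightarrow> real^'n^'m \<Rightarrow> bool" where
  "mat_cong_mod2 A B \<longleftrightarrow> (\<forall>i j. cong_mod2 (A$i$j) (B$i$j))"

lemma int_matrix_mat_1 [simp]: "int_matrix (mat 1)"
  by (simp add: int_matrix_def mat_def)

lemma mat_cong_mod2_int_matrix: "mat_cong_mod2 A B \<Longrightarrow> int_matrix B \<Longrightarrow> int_matrix A"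
  unfolding mat_cong_mod2_def int_matrix_def using cong_mod2_Ints by blast

lemma mat_cong_mod2_transpose: "mat_cong_mod2 A B \<Longrightarrow> mat_cong_mod2 (transpose A) (transpose B)"
  by (simp add: mat_cong_mod2_def transpose_def)

lemma mat_cong_mod2_mult:
  assumes "mat_cong_mod2 A A'" "mat_cong_mod2 B B'" "int_matrix A'" "int_matrix B"
  shows "mat_cong_mod2 (A ** B) (A' ** B')"
  using assms unfolding mat_cong_mod2_def int_matrix_def matrix_matrix_mult_def
  by (auto intro!: cong_mod2_sum cong_mod2_mult)

lemma mat_cong_mod2_sandwich:
  assumes "mat_cong_mod2 U (mat 1)" "mat_cong_mod2 V (mat 1)" "int_matrix G"
  shows "mat_cong_mod2 (U ** G ** transpose V) G"
proof -
  have VT: "mat_cong_mod2 (transpose V) (mat 1)"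
    using mat_cong_mod2_transpose[OF assms(2)] by simp
  have "mat_cong_mod2 (U ** G) (mat 1 ** G)"
    using assms by (intro mat_cong_mod2_mult) (auto simp: mat_cong_mod2_def)
  then have "mat_cong_mod2 (U ** G ** transpose V) (G ** mat 1)"
    using VT assms(3) by (intro mat_cong_mod2_mult) (auto intro: mat_cong_mod2_int_matrix)
  then show ?thesis by simp
qed

lemma Sperp_cong_mod2: "mat_cong_mod2 (Sperp i) (mat 1)"
  by (auto simp: mat_cong_mod2_def cong_mod2_def Sperp_def mat_def)

lemma Sperp_involution: "Sperp i ** Sperp i = mat 1"
  unfolding Sperp_def matrix_matrix_mult_def mat_def
  using exhaust_4[of i] by (auto simp add: vec_eq_iff sum_4 forall_4)

lemma matrix_inv_eqI:
  assumes "A ** B = mat 1" "B ** A = mat 1"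
  shows "matrix_inv A = B"
  unfolding matrix_inv_def
proof (rule some_equality)
  fix B' assume "A ** B' = mat 1 \<and> B' ** A = mat 1"
  then have "B' = (B ** A) ** B'" by (simp add: assms(2))
  also have "\<dots> = B ** (A ** B')" by (simp only: matrix_mul_assoc)
  also have "\<dots> = B" using \<open>A ** B' = mat 1 \<and> B' ** A = mat 1\<close> by simp
  finally show "B' = B" .
qed (use assms in simp)

text \<open>The inverse is carried along because \<^const>\<open>dual_apollonian\<close> is closed under
  \<^const>\<open>matrix_inv\<close>, which is only determined once an inverse is known.\<close>

lemma dual_apollonian_inverse_cong_mod2:
  assumes "U \<in> dual_apollonian"
  shows "\<exists>V. U ** V = mat 1 \<and> V ** U = mat 1 \<and> mat_cong_mod2 U (mat 1) \<and> mat_cong_mod2 V (mat 1)"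
  using assms
proof induction
  case (gen i)
  show ?case using Sperp_involution Sperp_cong_mod2 by blast
next
  case one
  show ?case by (intro exI[of _ "mat 1"]) (simp add: mat_cong_mod2_def)
next
  case (mult U V)
  then obtain U' V' where
    "U ** U' = mat 1" "U' ** U = mat 1" "mat_cong_mod2 U (mat 1)" "mat_cong_mod2 U' (mat 1)"
    "V ** V' = mat 1" "V' ** V = mat 1" "mat_cong_mod2 V (mat 1)" "mat_cong_mod2 V' (mat 1)"
    by blast
  moreover have "mat_cong_mod2 (A ** B) (mat 1)"
    if "mat_cong_mod2 A (mat 1)" "mat_cong_mod2 B (mat 1)" for A B :: "real^4^4"
    using mat_cong_mod2_mult[OF that] mat_cong_mod2_int_matrix[OF that(2)] by simp
  moreover have "U ** V ** (V' ** U') = U ** (V ** V') ** U'"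
    "V' ** U' ** (U ** V) = V' ** (U' ** U) ** V"
    by (simp_all only: matrix_mul_assoc)
  then have "U ** V ** (V' ** U') = mat 1" "V' ** U' ** (U ** V) = mat 1"
    using \<open>U ** U' = mat 1\<close> \<open>V ** V' = mat 1\<close> \<open>U' ** U = mat 1\<close> \<open>V' ** V = mat 1\<close>
    by simp_all
  ultimately show ?case by blast
next
  case (inv U)
  then obtain V where "U ** V = mat 1" "V ** U = mat 1" "mat_cong_mod2 U (mat 1)" "mat_cong_mod2 V (mat 1)"
    by blast
  then show ?case by (intro exI[of _ U]) (simp add: matrix_inv_eqI)
qed

lemma dual_apollonian_cong_mod2: "U \<in> dual_apollonian \<Longrightarrow> mat_cong_mod2 U (mat 1)"
  using dual_apollonian_inverse_cong_mod2 by blast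

lemma descartes_valid_oc: "descartes D \<Longrightarrow> valid_oc (D k)"
  unfolding descartes_def by simp

lemma descartes_tangent_oc: "descartes D \<Longrightarrow> k \<noteq> l \<Longrightarrow> tangent_oc (D k) (D l)"
  unfolding descartes_def by simp

lemma descartes_inversive_prod_cong_mod2:
  assumes "descartes D"
  shows "cong_mod2 (inversive_prod (D k) (D l)) 1"
proof (cases "k = l")
  case True
  then show ?thesis
    using inversive_prod_self[OF descartes_valid_oc[OF assms]] by simp
next
  case False
  then have "(inversive_prod (D k) (D l))\<^sup>2 = 1"
    using assms by (intro inversive_prod_sq_eq_1_if_tangent_oc descartes_valid_oc descartes_tangent_oc)
  then show ?thesis
    by (auto simp: power2_eq_1_iff cong_mod2_def)
qed

lemma orbit_dual_inversive_prod_cong_mod2: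
  assumes "descartes D" "D1 \<in> orbit_dual D" "D2 \<in> orbit_dual D"
  shows "cong_mod2 (inversive_prod (D1 k) (D2 l)) 1"
proof -
  obtain U V where UV: "U \<in> dual_apollonian" "Wmat D1 = U ** Wmat D"
    "V \<in> dual_apollonian" "Wmat D2 = V ** Wmat D"
    using assms(2,3) unfolding orbit_dual_def by blast
  define G where "G = Wmat D ** lorentz_matrix ** transpose (Wmat D)"
  have G_odd: "cong_mod2 (G $ i $ j) 1" for i j
    unfolding G_def Wmat_lorentz_sandwich using assms(1) by (rule descartes_inversive_prod_cong_mod2)
  have "int_matrix G"
    unfolding int_matrix_def using cong_mod2_Ints[OF G_odd Ints_1] by blast
  then have "mat_cong_mod2 (U ** G ** transpose V) G"
    using UV by (intro mat_cong_mod2_sandwich dual_apollonian_cong_mod2)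
  then have "cong_mod2 ((U ** G ** transpose V) $ k $ l) (G $ k $ l)"
    unfolding mat_cong_mod2_def by blast
  moreover have "Wmat D1 ** lorentz_matrix ** transpose (Wmat D2) = U ** G ** transpose V"
    unfolding UV(2,4) G_def matrix_transpose_mul matrix_mul_assoc ..
  then have "inversive_prod (D1 k) (D2 l) = (U ** G ** transpose V) $ k $ l"
    by (simp only: Wmat_lorentz_sandwich[symmetric])
  ultimately show ?thesis
    using cong_mod2_trans G_odd by metis
qed

theorem theorem5p1:
  assumes "descartes D"
  shows "\<forall>A \<in> packing_dual D. \<forall>B \<in> packing_dual D.
           A = B \<or> (\<exists>!z. z \<in> A \<inter> B) \<or> A \<inter> B = {}"
proof (intro ballI)
  fix A B assume "A \<in> packing_dual D" "B \<in> packing_dual D"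
  then obtain D1 k D2 l where
    A: "A = pts (D1 k)" "D1 \<in> orbit_dual D" and B: "B = pts (D2 l)" "D2 \<in> orbit_dual D"
    unfolding packing_dual_def by blast
  have "1 \<le> (inversive_prod (D1 k) (D2 l))\<^sup>2"
    using orbit_dual_inversive_prod_cong_mod2[OF assms A(2) B(2)] by (rule one_le_square_if_cong_mod2_one)
  moreover have "valid_oc (D1 k)" "valid_oc (D2 l)"
    using A(2) B(2) unfolding orbit_dual_def by (simp_all add: descartes_valid_oc)
  ultimately have "non_crossing A B"
    unfolding A B by (intro non_crossing_pts_if_one_le_inversive_prod_sq)
  then show "A = B \<or> (\<exists>!z. z \<in> A \<inter> B) \<or> A \<inter> B = {}"
    unfolding non_crossing_def .
qed

end
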